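(* Let $G$ be a free nilpotent group of class $d\in\mathbb{N}$ with free generators $g_i=g_{1,i}$, $i=1,\dots,n=\mathrm{rk}(G)$. Then for any $d'<d$ and any polynomial maps $\xi_i\colon G\to\mathbb{R}$, $i=1,\dots,n$, of degree at most $d'$, there is a polynomial map $\xi\colon G\to\mathbb{R}$ of degree at most $d'+1$ such that $\partial_{g_i}\xi=\xi_i$ for all $i$.
   Context: The free nilpotent group of class $d$ on $n$ generators is $F_n/(F_n)_{[d+1]}$ where $F_n$ is the free group and $(\cdot)_{[k]}$ the lower central series. $(\partial_g\xi)(h)=\xi(g^{-1}h)-\xi(h)$; $\xi$ is a polynomial of degree at most $d$ if $\partial_{g_1}\cdots\partial_{g_{d+1}}\xi\equiv0$ for all $g_1,\dots,g_{d+1}\in G$. *)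

theory Defs
  imports "HOL-Algebra.Algebra" Complex_Main
begin

text \<open>A letter (i, True) is the generator x_i, (i, False) is its inverse.\<close>

definition cancels :: "nat \<times> bool \<Rightarrow> nat \<times> bool \<Rightarrow> bool" where
  "cancels a b \<longleftrightarrow> fst a = fst b \<and> snd a \<noteq> snd b"

definition reduce :: "(nat \<times> bool) list \<Rightarrow> (nat \<times> bool) list" where
  "reduce w = foldr (\<lambda>x acc. case acc of [] \<Rightarrow> [x]
                       | y # ys \<Rightarrow> (if cancels x y then ys else x # y # ys)) w []"

definition free_group :: "nat \<Rightarrow> (nat \<times> bool) list monoid" where
  "free_group n = \<lparr> carrier = {w. set w \<subseteq> {0..<n} \<times> UNIV \<and> reduce w = w},
                    monoid.mult = (\<lambda>u v. reduce (u @ v)),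
                    one = [] \<rparr>"

section \<open>Lower central series, indexed from 1: G_[1] = G, G_[k+1] = [G, G_[k]]\<close>

fun lower_central :: "('a, 'b) monoid_scheme \<Rightarrow> nat \<Rightarrow> 'a set" where
  "lower_central G 0 = carrier G"
| "lower_central G (Suc 0) = carrier G"
| "lower_central G (Suc (Suc k)) =
     generate G {x \<otimes>\<^bsub>G\<^esub> y \<otimes>\<^bsub>G\<^esub> inv\<^bsub>G\<^esub> x \<otimes>\<^bsub>G\<^esub> inv\<^bsub>G\<^esub> y
                 | x y. x \<in> carrier G \<and> y \<in> lower_central G (Suc k)}"

definition free_nilpotent_with_gens ::
    "('g, 'b) monoid_scheme \<Rightarrow> nat \<Rightarrow> nat \<Rightarrow> (nat \<Rightarrow> 'g) \<Rightarrow> bool" where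
  "free_nilpotent_with_gens G d n g \<longleftrightarrow> group G \<and>
     (\<exists>\<phi>. \<phi> \<in> hom (free_group n) G \<and> \<phi> ` carrier (free_group n) = carrier G \<and>
          kernel (free_group n) G \<phi> = lower_central (free_group n) (Suc d) \<and>
          (\<forall>i<n. \<phi> [(i, True)] = g i))"

definition diffop :: "('g, 'b) monoid_scheme \<Rightarrow> 'g \<Rightarrow> ('g \<Rightarrow> real) \<Rightarrow> 'g \<Rightarrow> real" where
  "diffop G g \<xi> h = \<xi> (inv\<^bsub>G\<^esub> g \<otimes>\<^bsub>G\<^esub> h) - \<xi> h"

definition poly_deg_le :: "('g, 'b) monoid_scheme \<Rightarrow> nat \<Rightarrow> ('g \<Rightarrow> real) \<Rightarrow> bool" where
  "poly_deg_le G k \<xi> \<longleftrightarrow>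
     (\<forall>gs. length gs = Suc k \<and> set gs \<subseteq> carrier G \<longrightarrow>
        (\<forall>h\<in>carrier G. foldr (diffop G) gs \<xi> h = 0))"

end

theory Submission
  imports Defs
begin

text \<open>
  Pull everything back to the free group F along \<open>\<phi>: F \<rightarrow> G\<close>. On F the equations
  \<open>\<partial>\<^bsub>x_i\<^esub> \<Xi> = \<xi>_i \<circ> \<phi>\<close> can be solved letter by letter along reduced words. Since the
  differences of \<open>\<Xi>\<close> along the generators have degree at most d', and the elements u with
  \<open>deg \<partial>\<^sub>u \<Xi> \<le> d'\<close> form a subgroup, \<open>\<Xi>\<close> has degree at most d' + 1. A commutator [x, y]
  acts, up to a translation, as \<open>\<partial>\<^sub>x \<partial>\<^sub>y - \<partial>\<^sub>y \<partial>\<^sub>x\<close>, so \<open>\<partial>\<^sub>u\<close> lowers degrees by k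
  for u in the k-th term of the lower central series. As d' + 2 \<le> d + 1, the kernel of \<open>\<phi>\<close>
  therefore leaves \<open>\<Xi>\<close> invariant, and \<open>\<Xi>\<close> descends to the required \<open>\<xi>\<close> on G.
\<close>

definition reduce_step :: "nat \<times> bool \<Rightarrow> (nat \<times> bool) list \<Rightarrow> (nat \<times> bool) list" where
  "reduce_step x acc = (case acc of [] \<Rightarrow> [x] | y # ys \<Rightarrow> (if cancels x y then ys else x # y # ys))"

lemma reduce_eq_foldr: "reduce w = foldr reduce_step w []"
  unfolding reduce_def reduce_step_def by simp

lemma reduce_append: "reduce (u @ v) = foldr reduce_step u (reduce v)"
  by (simp add: reduce_eq_foldr)

fun reduced :: "(nat \<times> bool) list \<Rightarrow> bool" where
  "reduced [] = True"
| "reduced [x] = True"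
| "reduced (x # y # ys) = (\<not> cancels x y \<and> reduced (y # ys))"

lemma reduced_ConsD: "reduced (x # ys) \<Longrightarrow> reduced ys"
  by (cases ys) auto

lemma reduced_reduce_step: "reduced acc \<Longrightarrow> reduced (reduce_step x acc)"
  by (cases acc) (auto simp: reduce_step_def dest: reduced_ConsD)

lemma reduced_foldr_reduce_step: "reduced acc \<Longrightarrow> reduced (foldr reduce_step w acc)"
  by (induction w) (auto intro: reduced_reduce_step)

lemma reduced_reduce: "reduced (reduce w)"
  unfolding reduce_eq_foldr by (rule reduced_foldr_reduce_step) simp

lemma reduce_reduced: "reduced w \<Longrightarrow> reduce w = w"
proof (induction w)
  case Nil
  then show ?case by (simp add: reduce_eq_foldr)
next
  case (Cons x w)
  then have "reduce w = w" using reduced_ConsD by blast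
  then show ?case using Cons.prems by (cases w) (auto simp: reduce_eq_foldr reduce_step_def)
qed

lemma reduce_idem: "reduce (reduce w) = reduce w"
  by (rule reduce_reduced[OF reduced_reduce])

lemma cancels_cancels_eq: "cancels x y \<Longrightarrow> cancels y z \<Longrightarrow> x = z"
  by (cases x; cases y; cases z) (auto simp: cancels_def)

lemma reduce_step_cancel:
  assumes "cancels x y" and "reduced t"
  shows "reduce_step x (reduce_step y t) = t"
proof (cases t)
  case Nil
  then show ?thesis using assms(1) by (simp add: reduce_step_def)
next
  case (Cons z zs)
  show ?thesis
  proof (cases "cancels y z")
    case True
    then have "x = z" using cancels_cancels_eq assms(1) by blast
    then show ?thesis using True Cons assms(2) by (cases zs) (simp_all add: reduce_step_def)
  next
    case False
    then show ?thesis using assms(1) Cons by (simp add: reduce_step_def)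
  qed
qed

lemma foldr_reduce_step_reduce:
  "reduced s \<Longrightarrow> foldr reduce_step u s = foldr reduce_step (reduce u) s"
proof (induction u)
  case Nil
  then show ?case by (simp add: reduce_eq_foldr)
next
  case (Cons x u)
  have "reduce_step x (foldr reduce_step (reduce u) s) = foldr reduce_step (reduce_step x (reduce u)) s"
  proof (cases "reduce u")
    case (Cons y ys)
    have "reduced (foldr reduce_step ys s)" using Cons.prems by (rule reduced_foldr_reduce_step)
    then show ?thesis using Cons reduce_step_cancel by (simp add: reduce_step_def)
  qed (simp add: reduce_step_def)
  then show ?case using Cons by (simp add: reduce_eq_foldr)
qed

lemma reduce_assoc: "reduce (reduce (u @ v) @ w) = reduce (u @ reduce (v @ w))"
proof -
  have "reduce (reduce (u @ v) @ w) = foldr reduce_step (reduce (u @ v)) (reduce w)"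
    by (rule reduce_append)
  also have "\<dots> = foldr reduce_step (u @ v) (reduce w)"
    using foldr_reduce_step_reduce[OF reduced_reduce] by metis
  also have "\<dots> = reduce (u @ reduce (v @ w))"
    by (metis foldr_append reduce_append reduce_idem)
  finally show ?thesis .
qed

lemma set_reduce: "set (reduce w) \<subseteq> set w"
proof -
  have "set (foldr reduce_step w acc) \<subseteq> set w \<union> set acc" for acc
    by (induction w) (auto simp: reduce_step_def split: list.splits if_splits)
  then show ?thesis using reduce_eq_foldr by (metis sup_bot.right_neutral empty_set)
qed

definition word_inv :: "(nat \<times> bool) list \<Rightarrow> (nat \<times> bool) list" where
  "word_inv w = rev (map (\<lambda>(i, b). (i, \<not> b)) w)"

lemma reduce_word_inv_append: "reduce (word_inv w @ w) = []"
proof (induction w)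
  case Nil
  then show ?case by (simp add: word_inv_def reduce_eq_foldr)
next
  case (Cons x w)
  obtain i b where x: "x = (i, b)" by force
  have c: "cancels (i, \<not> b) x" using x by (simp add: cancels_def)
  have "reduce (word_inv (x # w) @ x # w)
      = foldr reduce_step (word_inv w) (reduce_step (i, \<not> b) (reduce_step x (reduce w)))"
    by (simp add: word_inv_def x reduce_eq_foldr)
  also have "\<dots> = foldr reduce_step (word_inv w) (reduce w)"
    using reduce_step_cancel[OF c reduced_reduce] by simp
  also have "\<dots> = []" using Cons by (simp add: reduce_append)
  finally show ?case .
qed

lemma carrier_free_group:
  "w \<in> carrier (free_group n) \<longleftrightarrow> set w \<subseteq> {0..<n} \<times> UNIV \<and> reduced w"
  by (auto simp: free_group_def intro: reduce_reduced) (metis reduced_reduce)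

lemma mult_free_group: "u \<otimes>\<^bsub>free_group n\<^esub> v = reduce (u @ v)"
  by (simp add: free_group_def)

lemma one_free_group: "\<one>\<^bsub>free_group n\<^esub> = []"
  by (simp add: free_group_def)

lemma group_free_group: "group (free_group n)"
proof (rule groupI)
  fix x y
  assume "x \<in> carrier (free_group n)" "y \<in> carrier (free_group n)"
  then show "x \<otimes>\<^bsub>free_group n\<^esub> y \<in> carrier (free_group n)"
    using set_reduce[of "x @ y"] by (auto simp: carrier_free_group mult_free_group reduced_reduce)
next
  fix x
  assume x: "x \<in> carrier (free_group n)"
  then have "reduce x = x" by (simp add: carrier_free_group reduce_reduced)
  then have "reduce (word_inv x) \<otimes>\<^bsub>free_group n\<^esub> x = \<one>\<^bsub>free_group n\<^esub>"
    using foldr_reduce_step_reduce[of x "word_inv x"] reduced_reduce[of x] reduce_word_inv_append[of x]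
    by (simp add: mult_free_group one_free_group reduce_append)
  moreover have "reduce (word_inv x) \<in> carrier (free_group n)"
    using x set_reduce[of "word_inv x"]
    by (auto simp: carrier_free_group reduced_reduce word_inv_def)
  ultimately show "\<exists>y\<in>carrier (free_group n). y \<otimes>\<^bsub>free_group n\<^esub> x = \<one>\<^bsub>free_group n\<^esub>"
    by blast
qed (auto simp: carrier_free_group mult_free_group one_free_group reduce_assoc reduce_reduced)

lemma inv_free_group_letter: "i < n \<Longrightarrow> inv\<^bsub>free_group n\<^esub> [(i, True)] = [(i, False)]"
  by (rule group.inv_equality[OF group_free_group])
     (auto simp: mult_free_group one_free_group carrier_free_group reduce_eq_foldr reduce_step_def cancels_def)

lemma free_group_Cons:
  "x # w \<in> carrier (free_group n) \<Longrightarrow>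
   x # w = [x] \<otimes>\<^bsub>free_group n\<^esub> w \<and> [x] \<in> carrier (free_group n) \<and> w \<in> carrier (free_group n)"
  by (auto simp: carrier_free_group mult_free_group reduce_reduced dest: reduced_ConsD)

lemma generate_free_group:
  "carrier (free_group n) = generate (free_group n) ((\<lambda>i. [(i, True)]) ` {..<n})"
    (is "_ = generate ?F ?S")
proof
  interpret F: group ?F by (rule group_free_group)
  show "generate ?F ?S \<subseteq> carrier ?F"
    by (rule F.generate_incl) (auto simp: carrier_free_group)
  show "carrier ?F \<subseteq> generate ?F ?S"
  proof
    fix w
    show "w \<in> carrier ?F \<Longrightarrow> w \<in> generate ?F ?S"
    proof (induction w)
      case Nil
      then show ?case using generate.one by (metis one_free_group)
    next
      case (Cons x w)
      obtain i b where x: "x = (i, b)" by force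
      have i: "i < n" using Cons.prems x by (auto simp: carrier_free_group)
      have "[x] \<in> generate ?F ?S"
      proof (cases b)
        case True
        then show ?thesis using x i by (auto intro: generate.incl)
      next
        case False
        then show ?thesis using x i generate.inv[of "[(i, True)]" ?S ?F]
          by (auto simp: inv_free_group_letter)
      qed
      then show ?case using free_group_Cons[OF Cons.prems] Cons.IH generate.eng by metis
    qed
  qed
qed

fun diffs_vanish :: "('g, 'b) monoid_scheme \<Rightarrow> nat \<Rightarrow> ('g \<Rightarrow> real) \<Rightarrow> bool" where
  "diffs_vanish G 0 f \<longleftrightarrow> (\<forall>h\<in>carrier G. f h = 0)"
| "diffs_vanish G (Suc k) f \<longleftrightarrow> (\<forall>g\<in>carrier G. diffs_vanish G k (diffop G g f))"

lemma foldr_diffop_vanish_iff: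
  "(\<forall>gs. length gs = k \<and> set gs \<subseteq> carrier G \<longrightarrow> (\<forall>h\<in>carrier G. foldr (diffop G) gs f h = 0))
   \<longleftrightarrow> diffs_vanish G k f"
proof (induction k arbitrary: f)
  case (Suc k)
  have "(\<forall>gs. length gs = Suc k \<and> set gs \<subseteq> carrier G \<longrightarrow> (\<forall>h\<in>carrier G. foldr (diffop G) gs f h = 0))
    \<longleftrightarrow> (\<forall>g\<in>carrier G. \<forall>gs. length gs = k \<and> set gs \<subseteq> carrier G \<longrightarrow>
          (\<forall>h\<in>carrier G. foldr (diffop G) gs (diffop G g f) h = 0))"
  proof (intro iffI ballI allI impI)
    fix g gs h
    assume "\<forall>gs. length gs = Suc k \<and> set gs \<subseteq> carrier G \<longrightarrow> (\<forall>h\<in>carrier G. foldr (diffop G) gs f h = 0)"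
      and "g \<in> carrier G" "length gs = k \<and> set gs \<subseteq> carrier G" "h \<in> carrier G"
    then show "foldr (diffop G) gs (diffop G g f) h = 0"
      by (drule_tac x = "gs @ [g]" in spec) auto
  next
    fix gs h
    assume A: "\<forall>g\<in>carrier G. \<forall>gs. length gs = k \<and> set gs \<subseteq> carrier G \<longrightarrow>
                 (\<forall>h\<in>carrier G. foldr (diffop G) gs (diffop G g f) h = 0)"
      and gs: "length gs = Suc k \<and> set gs \<subseteq> carrier G" and h: "h \<in> carrier G"
    obtain gs' g where "gs = gs' @ [g]" using gs by (metis length_Suc_conv_rev)
    then show "foldr (diffop G) gs f h = 0" using A gs h by auto
  qed
  then show ?case using Suc by simp
qed simp

lemma poly_deg_le_iff_diffs_vanish: "poly_deg_le G k f \<longleftrightarrow> diffs_vanish G (Suc k) f"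
  unfolding poly_deg_le_def by (rule foldr_diffop_vanish_iff)

lemma diffs_vanish_add:
  "diffs_vanish G k f \<Longrightarrow> diffs_vanish G k f' \<Longrightarrow> diffs_vanish G k (\<lambda>h. f h + f' h)"
proof (induction k arbitrary: f f')
  case (Suc k)
  have "diffop G g (\<lambda>h. f h + f' h) = (\<lambda>h. diffop G g f h + diffop G g f' h)" for g
    by (auto simp: diffop_def)
  then show ?case using Suc by simp
qed simp

lemma diffs_vanish_diff:
  "diffs_vanish G k f \<Longrightarrow> diffs_vanish G k f' \<Longrightarrow> diffs_vanish G k (\<lambda>h. f h - f' h)"
proof (induction k arbitrary: f f')
  case (Suc k)
  have "diffop G g (\<lambda>h. f h - f' h) = (\<lambda>h. diffop G g f h - diffop G g f' h)" for g
    by (auto simp: diffop_def)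
  then show ?case using Suc by simp
qed simp

lemma diffs_vanish_minus: "diffs_vanish G k f \<Longrightarrow> diffs_vanish G k (\<lambda>h. - f h)"
proof (induction k arbitrary: f)
  case (Suc k)
  have "diffop G g (\<lambda>h. - f h) = (\<lambda>h. - diffop G g f h)" for g
    by (auto simp: diffop_def)
  then show ?case using Suc by simp
qed simp

lemma diffs_vanish_zero: "diffs_vanish G k (\<lambda>h. 0)"
proof -
  have "diffop G g (\<lambda>h. 0) = (\<lambda>h. 0)" for g
    by (auto simp: diffop_def)
  then show ?thesis by (induction k) simp_all
qed

context group
begin

lemma diffs_vanish_cong:
  "diffs_vanish G k f \<Longrightarrow> (\<And>h. h \<in> carrier G \<Longrightarrow> f h = f' h) \<Longrightarrow> diffs_vanish G k f'"
proof (induction k arbitrary: f f')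
  case (Suc k)
  have "diffs_vanish G k (diffop G g f')" if g: "g \<in> carrier G" for g
  proof (rule Suc.IH)
    show "diffs_vanish G k (diffop G g f)" using Suc.prems(1) g by simp
  qed (use Suc.prems(2) g in \<open>simp add: diffop_def\<close>)
  then show ?case by simp
qed simp

lemma diffs_vanish_Suc: "diffs_vanish G k f \<Longrightarrow> diffs_vanish G (Suc k) f"
  by (induction k arbitrary: f) (auto simp: diffop_def)

lemma diffs_vanish_mono: "k \<le> k' \<Longrightarrow> diffs_vanish G k f \<Longrightarrow> diffs_vanish G k' f"
  by (induction rule: dec_induct) (auto intro: diffs_vanish_Suc simp del: diffs_vanish.simps)

lemma diffs_vanish_diffop:
  assumes "g \<in> carrier G" and "diffs_vanish G k f"
  shows "diffs_vanish G k (diffop G g f)"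
proof (cases k)
  case 0
  then show ?thesis using assms by (simp add: diffop_def)
next
  case (Suc k')
  then show ?thesis using assms by (metis diffs_vanish.simps(2) diffs_vanish_Suc)
qed

lemma diffs_vanish_translate:
  assumes a: "a \<in> carrier G" and f: "diffs_vanish G k f"
  shows "diffs_vanish G k (\<lambda>h. f (a \<otimes> h))"
proof (rule diffs_vanish_cong)
  show "diffs_vanish G k (\<lambda>h. f h + diffop G (inv a) f h)"
    using a f by (intro diffs_vanish_add diffs_vanish_diffop) auto
qed (use a in \<open>simp add: diffop_def\<close>)

lemma diffop_mult:
  "u \<in> carrier G \<Longrightarrow> v \<in> carrier G \<Longrightarrow> h \<in> carrier G \<Longrightarrow>
   diffop G (u \<otimes> v) f h = diffop G v f (inv u \<otimes> h) + diffop G u f h"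
  by (simp add: diffop_def inv_mult_group m_assoc)

lemma diffop_inv:
  "u \<in> carrier G \<Longrightarrow> h \<in> carrier G \<Longrightarrow> diffop G (inv u) f h = - diffop G u f (u \<otimes> h)"
  by (simp add: diffop_def m_assoc [symmetric])

lemma diffop_commutator:
  assumes x: "x \<in> carrier G" and y: "y \<in> carrier G" and h: "h \<in> carrier G"
  shows "diffop G (x \<otimes> y \<otimes> inv x \<otimes> inv y) f h =
    diffop G x (diffop G y (\<lambda>h. f (y \<otimes> x \<otimes> h))) h - diffop G y (diffop G x (\<lambda>h. f (y \<otimes> x \<otimes> h))) h"
proof -
  have "inv (x \<otimes> y \<otimes> inv x \<otimes> inv y) \<otimes> h = y \<otimes> x \<otimes> (inv y \<otimes> (inv x \<otimes> h))"
    using x y h by (simp add: inv_mult_group m_assoc)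
  moreover have "y \<otimes> x \<otimes> (inv x \<otimes> (inv y \<otimes> h)) = h"
    using x y h by (simp add: m_assoc [symmetric]) (simp add: m_assoc)
  ultimately show ?thesis using x y h by (simp add: diffop_def)
qed

lemma diffs_vanish_diffop_generate:
  assumes "u \<in> generate G S" and S: "S \<subseteq> carrier G"
    and gens: "\<And>s. s \<in> S \<Longrightarrow> diffs_vanish G k (diffop G s f)"
  shows "diffs_vanish G k (diffop G u f)"
  using assms(1)
proof (induction u rule: generate.induct)
  case one
  show ?case by (rule diffs_vanish_cong[OF diffs_vanish_zero]) (simp add: diffop_def)
next
  case (incl s)
  then show ?case by (rule gens)
next
  case (inv s)
  then have s: "s \<in> carrier G" using S by blast
  have "diffs_vanish G k (\<lambda>h. - diffop G s f (s \<otimes> h))"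
    using inv s gens by (intro diffs_vanish_minus diffs_vanish_translate)
  then show ?case by (rule diffs_vanish_cong) (simp add: diffop_inv s)
next
  case (eng u v)
  have u: "u \<in> carrier G" and "v \<in> carrier G"
    using eng.hyps generate_incl[OF S] by auto
  have "diffs_vanish G k (\<lambda>h. diffop G v f (inv u \<otimes> h) + diffop G u f h)"
    using eng.IH u by (intro diffs_vanish_add diffs_vanish_translate) auto
  then show ?case by (rule diffs_vanish_cong) (simp add: diffop_mult u \<open>v \<in> carrier G\<close>)
qed

lemma diffs_vanish_Suc_if_generate:
  assumes gen: "carrier G = generate G S" and "\<And>s. s \<in> S \<Longrightarrow> diffs_vanish G k (diffop G s f)"
  shows "diffs_vanish G (Suc k) f"
proof -
  have S: "S \<subseteq> carrier G" by (metis gen generate.incl subsetI)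
  have "diffs_vanish G k (diffop G u f)" if "u \<in> carrier G" for u
    using diffs_vanish_diffop_generate[OF _ S assms(2)] that gen by blast
  then show ?thesis by simp
qed

lemma lower_central_subset_carrier: "lower_central G k \<subseteq> carrier G"
proof (induction k)
  case (Suc k)
  then show ?case by (cases k) (auto intro!: generate_incl)
qed simp

lemma diffs_vanish_diffop_commutator:
  assumes x: "x \<in> carrier G" and y: "y \<in> carrier G"
    and lowers: "\<And>j f. diffs_vanish G (j + m) f \<Longrightarrow> diffs_vanish G j (diffop G y f)"
    and f: "diffs_vanish G (j + Suc m) f"
  shows "diffs_vanish G j (diffop G (x \<otimes> y \<otimes> inv x \<otimes> inv y) f)"
proof -
  define f' where "f' = (\<lambda>h. f (y \<otimes> x \<otimes> h))"
  have f': "diffs_vanish G (Suc j + m) f'"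
    unfolding f'_def using f x y by (intro diffs_vanish_translate) auto
  then have "diffs_vanish G (Suc j) (diffop G y f')" by (rule lowers)
  then have a: "diffs_vanish G j (diffop G x (diffop G y f'))" using x by simp
  have "diffs_vanish G (j + m) (diffop G x f')" using f' x by simp
  then have b: "diffs_vanish G j (diffop G y (diffop G x f'))" by (rule lowers)
  have "diffs_vanish G j (\<lambda>h. diffop G x (diffop G y f') h - diffop G y (diffop G x f') h)"
    using a b by (rule diffs_vanish_diff)
  then show ?thesis by (rule diffs_vanish_cong) (simp add: diffop_commutator x y f'_def)
qed

lemma diffs_vanish_diffop_lower_central:
  "u \<in> lower_central G (Suc m) \<Longrightarrow> diffs_vanish G (j + Suc m) f \<Longrightarrow> diffs_vanish G j (diffop G u f)"
proof (induction m arbitrary: u j f)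
  case 0
  then show ?case by simp
next
  case (Suc m)
  define S where "S = {x \<otimes> y \<otimes> inv x \<otimes> inv y | x y. x \<in> carrier G \<and> y \<in> lower_central G (Suc m)}"
  have u: "u \<in> generate G S" using Suc.prems(1) by (simp add: S_def)
  have S: "S \<subseteq> carrier G"
    using lower_central_subset_carrier by (auto simp: S_def dest!: subsetD)
  have "diffs_vanish G j (diffop G s f)" if "s \<in> S" for s
  proof -
    from that obtain x y where s: "s = x \<otimes> y \<otimes> inv x \<otimes> inv y"
      and x: "x \<in> carrier G" and y: "y \<in> lower_central G (Suc m)"
      by (auto simp: S_def)
    have "y \<in> carrier G" using y lower_central_subset_carrier by blast
    then show ?thesis
      unfolding s by (rule diffs_vanish_diffop_commutator[OF x _ Suc.IH[OF y] Suc.prems(2)])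
  qed
  then show ?case using diffs_vanish_diffop_generate[OF u S] by blast
qed

end

context group_hom
begin

lemma diffop_comp:
  "g \<in> carrier G \<Longrightarrow> x \<in> carrier G \<Longrightarrow> diffop G g (\<lambda>x. f (h x)) x = diffop H (h g) f (h x)"
  by (simp add: diffop_def)

lemma diffs_vanish_comp_iff:
  assumes surj: "h ` carrier G = carrier H"
  shows "diffs_vanish G k (\<lambda>x. f (h x)) \<longleftrightarrow> diffs_vanish H k f"
proof (induction k arbitrary: f)
  case 0
  show ?case unfolding diffs_vanish.simps surj [symmetric] by blast
next
  case (Suc k)
  have "diffs_vanish G k (diffop G g (\<lambda>x. f (h x))) \<longleftrightarrow> diffs_vanish H k (diffop H (h g) f)"
    if g: "g \<in> carrier G" for g
  proof -
    have "diffs_vanish G k (diffop G g (\<lambda>x. f (h x))) \<longleftrightarrow>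
          diffs_vanish G k (\<lambda>x. diffop H (h g) f (h x))"
      by (intro iffI; erule G.diffs_vanish_cong; simp add: diffop_comp g)
    also have "\<dots> \<longleftrightarrow> diffs_vanish H k (diffop H (h g) f)" by (rule Suc.IH)
    finally show ?thesis .
  qed
  then show ?case unfolding diffs_vanish.simps surj [symmetric] by blast
qed

lemma diffop_factor:
  assumes "\<forall>x\<in>carrier G. f (h x) = F x" and "g \<in> carrier G" and "x \<in> carrier G"
  shows "diffop H (h g) f (h x) = diffop G g F x"
  using assms by (simp add: diffop_def flip: hom_inv hom_mult)

lemma diffs_vanish_factor:
  assumes surj: "h ` carrier G = carrier H"
    and ker: "kernel G H h \<subseteq> lower_central G (Suc m)"
    and "k \<le> Suc m" and F: "diffs_vanish G k F"
  shows "\<exists>f. (\<forall>x\<in>carrier G. f (h x) = F x) \<and> diffs_vanish H k f"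
proof -
  have fibre: "F x = F x'" if x: "x \<in> carrier G" and x': "x' \<in> carrier G" and e: "h x = h x'" for x x'
  proof -
    define u where "u = x' \<otimes> inv x"
    have "u \<in> kernel G H h" using x x' e by (simp add: u_def kernel_def)
    moreover have "diffs_vanish G (0 + Suc m) F"
      using G.diffs_vanish_mono[OF assms(3,4)] by (simp del: diffs_vanish.simps)
    ultimately have "diffs_vanish G 0 (diffop G u F)"
      using ker by (intro G.diffs_vanish_diffop_lower_central) auto
    then have "diffop G u F x' = 0" using x' by simp
    moreover have "inv u \<otimes> x' = x"
      using x x' by (simp add: u_def G.inv_mult_group G.m_assoc)
    ultimately show ?thesis by (simp add: diffop_def)
  qed
  define f where "f y = F (SOME x. x \<in> carrier G \<and> h x = y)" for y
  have f: "\<forall>x\<in>carrier G. f (h x) = F x"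
    using someI_ex[of "\<lambda>x'. x' \<in> carrier G \<and> h x' = h _"] fibre unfolding f_def by blast
  then have "diffs_vanish G k (\<lambda>x. f (h x))" using F by (auto intro: G.diffs_vanish_cong)
  then show ?thesis using f diffs_vanish_comp_iff[OF surj] by blast
qed

end

fun word_primitive ::
    "(nat \<Rightarrow> 'g \<Rightarrow> real) \<Rightarrow> ((nat \<times> bool) list \<Rightarrow> 'g) \<Rightarrow> (nat \<times> bool) list \<Rightarrow> real" where
  "word_primitive \<xi>s \<phi> [] = 0"
| "word_primitive \<xi>s \<phi> ((i, True) # w) = word_primitive \<xi>s \<phi> w - \<xi>s i (\<phi> ((i, True) # w))"
| "word_primitive \<xi>s \<phi> ((i, False) # w) = word_primitive \<xi>s \<phi> w + \<xi>s i (\<phi> w)"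

lemma diffop_word_primitive:
  assumes i: "i < n" and w: "w \<in> carrier (free_group n)"
  shows "diffop (free_group n) [(i, True)] (word_primitive \<xi>s \<phi>) w = \<xi>s i (\<phi> w)"
proof -
  have "reduce w = w" using w by (simp add: carrier_free_group reduce_reduced)
  then have "inv\<^bsub>free_group n\<^esub> [(i, True)] \<otimes>\<^bsub>free_group n\<^esub> w = reduce_step (i, False) w"
    using inv_free_group_letter[OF i] by (simp add: mult_free_group reduce_eq_foldr)
  then show ?thesis
    by (cases w) (auto simp: diffop_def reduce_step_def cancels_def)
qed

lemma diffs_vanish_word_primitive:
  assumes "\<And>i. i < n \<Longrightarrow> diffs_vanish (free_group n) k (\<lambda>w. \<xi>s i (\<phi> w))"
  shows "diffs_vanish (free_group n) (Suc k) (word_primitive \<xi>s \<phi>)"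
proof (rule group.diffs_vanish_Suc_if_generate[OF group_free_group generate_free_group])
  fix s assume "s \<in> (\<lambda>i. [(i, True)]) ` {..<n}"
  then obtain i where i: "i < n" and s: "s = [(i, True)]" by blast
  show "diffs_vanish (free_group n) k (diffop (free_group n) s (word_primitive \<xi>s \<phi>))"
    by (rule group.diffs_vanish_cong[OF group_free_group assms[OF i]])
       (simp add: s diffop_word_primitive i)
qed

theorem lemma7p13:
  fixes G :: "('g, 'b) monoid_scheme" and d n d' :: nat and g :: "nat \<Rightarrow> 'g"
    and \<xi>s :: "nat \<Rightarrow> 'g \<Rightarrow> real"
  assumes "free_nilpotent_with_gens G d n g"
    and "d' < d"
    and "\<forall>i<n. poly_deg_le G d' (\<xi>s i)"
  shows "\<exists>\<xi>. poly_deg_le G (Suc d') \<xi> \<and>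
           (\<forall>i<n. \<forall>h\<in>carrier G. diffop G (g i) \<xi> h = \<xi>s i h)"
proof -
  let ?F = "free_group n"
  from assms(1) obtain \<phi> where "group G" and hom: "\<phi> \<in> hom ?F G"
    and surj: "\<phi> ` carrier ?F = carrier G" and ker: "kernel ?F G \<phi> = lower_central ?F (Suc d)"
    and gen: "\<forall>i<n. \<phi> [(i, True)] = g i"
    unfolding free_nilpotent_with_gens_def by blast
  interpret F: group ?F by (rule group_free_group)
  interpret \<phi>: group_hom ?F G \<phi>
    using F.group_axioms \<open>group G\<close> hom by (simp add: group_hom_def group_hom_axioms_def)
  define \<Xi> where "\<Xi> = word_primitive \<xi>s \<phi>"
  have "diffs_vanish ?F (Suc (Suc d')) \<Xi>"
    unfolding \<Xi>_def using assms(3)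
    by (intro diffs_vanish_word_primitive)
       (simp only: poly_deg_le_iff_diffs_vanish \<phi>.diffs_vanish_comp_iff[OF surj])
  then obtain \<xi> where \<xi>: "\<forall>w\<in>carrier ?F. \<xi> (\<phi> w) = \<Xi> w"
    and "diffs_vanish G (Suc (Suc d')) \<xi>"
    using \<phi>.diffs_vanish_factor[OF surj] ker assms(2) by (metis Suc_leI Suc_mono order_refl)
  then have "poly_deg_le G (Suc d') \<xi>" by (simp only: poly_deg_le_iff_diffs_vanish)
  moreover have "diffop G (g i) \<xi> (\<phi> w) = \<xi>s i (\<phi> w)" if i: "i < n" and w: "w \<in> carrier ?F" for i w
    using \<phi>.diffop_factor[OF \<xi>, of "[(i, True)]" w] diffop_word_primitive[OF i w] gen i w
    by (simp add: \<Xi>_def carrier_free_group)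
  ultimately show ?thesis unfolding surj [symmetric] by blast
qed

end
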